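(* Assume (A1)–(A4). Then $T(x)<T^*$ for all $x\in B_{R^*}$.
   Context: Let $p>1$ and $\mu>0$ with $p<1+2/\mu$, and let $R^*,T^*>0$. Write $B_R=\{x\in\mathbb{R}:|x|<R\}$. Fix $\gamma_1,\gamma_2>0$ with $\gamma_1+\gamma_2>\max\big(1,(\mu p 2^p)^{1/(p-1)}\big)$ and let $T_1=\frac{1}{(p-1)\mu}\ln\Big(\frac{2^{1-p}/\mu}{2^{1-p}/\mu-(\gamma_1+\gamma_2)^{1-p}}\Big)$, the finite blow-up time of the solution of $\hat\phi'=\hat\psi'=2^{-p}|\hat\phi+\hat\psi|^p-\frac{\mu}{2}(\hat\phi+\hat\psi)$, $\hat\phi(0)=\gamma_1$, $\hat\psi(0)=\gamma_2$. Assumptions on the real functions $f,g$: (A1) $T_1<T^*$. (A2) $f\ge\gamma_1$, $g\ge\gamma_2$ on $B_{R^*+T^*}$. (A3) $f,g\in\mathcal{C}^4(\overline{B_{R^*+T^*}})$. (A4) There is $\varepsilon_0>0$ with $2^{-p}(\gamma_1+\gamma_2)^p-\frac{\mu}{2}(\gamma_1+\gamma_2)\ge(2+\varepsilon_0)\max_{x\in B_{R^*+T^*}}(|f'(x)|+|g'(x)|)$. Let $K_{R^*,T^*}=\{(x,t):t>0,\ |x-x_0|<T^*-t\ \text{for some } x_0\in B_{R^*}\}$. Define iterates $\phi_0\equiv\gamma_1$, $\psi_0\equiv\gamma_2$ and, with $\mathcal{N}_n(x,s)=2^{-p}|\phi_n+\psi_n|^p(x,s)-\frac{\mu}{1+s}\frac{(\phi_n+\psi_n)(x,s)}{2}$,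 $\phi_{n+1}(x,t)=f(x+t)+\int_0^t\mathcal{N}_n(x+t-s,s)\,ds$, $\psi_{n+1}(x,t)=g(x-t)+\int_0^t\mathcal{N}_n(x-t+s,s)\,ds$. Set $\phi=\sup_n\phi_n$, $\psi=\sup_n\psi_n$ on $K_{R^*,T^*}$, and let $T(x)$, $x\in B_{R^*}$, be the blow-up time of $\phi+\psi$ at $x$, i.e. the supremum of $t>0$ such that $(\phi+\psi)(x,\tau)<\infty$ for $\tau<t$. *)

theory Defs
  imports "HOL-Analysis.Analysis"
begin

definition Ck_on :: "nat \<Rightarrow> real set \<Rightarrow> (real \<Rightarrow> real) \<Rightarrow> bool" where
  "Ck_on k S f \<longleftrightarrow> (\<exists>D :: nat \<Rightarrow> real \<Rightarrow> real.
      (\<forall>x\<in>S. D 0 x = f x) \<and>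
      (\<forall>j<k. \<forall>x\<in>S. (D j has_real_derivative D (Suc j) x) (at x within S)) \<and>
      continuous_on S (D k))"

definition coneK :: "real \<Rightarrow> real \<Rightarrow> (real \<times> real) set" where
  "coneK Rs Ts = {(x, t). t > 0 \<and> (\<exists>x0. \<bar>x0\<bar> < Rs \<and> \<bar>x - x0\<bar> < Ts - t)}"

definition nonlin :: "real \<Rightarrow> real \<Rightarrow> (real \<Rightarrow> real \<Rightarrow> real) \<Rightarrow> (real \<Rightarrow> real \<Rightarrow> real)
    \<Rightarrow> real \<Rightarrow> real \<Rightarrow> real" where
  "nonlin p \<mu> \<phi> \<psi> x s =
     2 powr (-p) * \<bar>\<phi> x s + \<psi> x s\<bar> powr p - \<mu> / (1 + s) * ((\<phi> x s + \<psi> x s) / 2)"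

fun iter :: "real \<Rightarrow> real \<Rightarrow> (real \<Rightarrow> real) \<Rightarrow> (real \<Rightarrow> real) \<Rightarrow> real \<Rightarrow> real \<Rightarrow> nat
    \<Rightarrow> (real \<Rightarrow> real \<Rightarrow> real) \<times> (real \<Rightarrow> real \<Rightarrow> real)" where
  "iter p \<mu> f g \<gamma>1 \<gamma>2 0 = ((\<lambda>x t. \<gamma>1), (\<lambda>x t. \<gamma>2))"
| "iter p \<mu> f g \<gamma>1 \<gamma>2 (Suc n) =
     (let \<phi> = fst (iter p \<mu> f g \<gamma>1 \<gamma>2 n); \<psi> = snd (iter p \<mu> f g \<gamma>1 \<gamma>2 n) in
      ((\<lambda>x t. f (x + t) + integral {0..t} (\<lambda>s. nonlin p \<mu> \<phi> \<psi> (x + t - s) s)),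
       (\<lambda>x t. g (x - t) + integral {0..t} (\<lambda>s. nonlin p \<mu> \<phi> \<psi> (x - t + s) s))))"

definition phi_lim :: "real \<Rightarrow> real \<Rightarrow> (real \<Rightarrow> real) \<Rightarrow> (real \<Rightarrow> real) \<Rightarrow> real \<Rightarrow> real
    \<Rightarrow> real \<Rightarrow> real \<Rightarrow> ereal" where
  "phi_lim p \<mu> f g \<gamma>1 \<gamma>2 x t = (SUP n. ereal (fst (iter p \<mu> f g \<gamma>1 \<gamma>2 n) x t))"

definition psi_lim :: "real \<Rightarrow> real \<Rightarrow> (real \<Rightarrow> real) \<Rightarrow> (real \<Rightarrow> real) \<Rightarrow> real \<Rightarrow> real
    \<Rightarrow> real \<Rightarrow> real \<Rightarrow> ereal" where
  "psi_lim p \<mu> f g \<gamma>1 \<gamma>2 x t = (SUP n. ereal (snd (iter p \<mu> f g \<gamma>1 \<gamma>2 n) x t))"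

definition blowup_time :: "real \<Rightarrow> real \<Rightarrow> real \<Rightarrow> real \<Rightarrow> (real \<Rightarrow> real) \<Rightarrow> (real \<Rightarrow> real)
    \<Rightarrow> real \<Rightarrow> real \<Rightarrow> real \<Rightarrow> ereal" where
  "blowup_time Rs Ts p \<mu> f g \<gamma>1 \<gamma>2 x =
     Sup (ereal ` {t. t > 0 \<and> (\<forall>\<tau>. 0 < \<tau> \<and> \<tau> < t \<longrightarrow>
          (x, \<tau>) \<in> coneK Rs Ts \<and>
          phi_lim p \<mu> f g \<gamma>1 \<gamma>2 x \<tau> + psi_lim p \<mu> f g \<gamma>1 \<gamma>2 x \<tau> < \<infinity>)})"

definition T1 :: "real \<Rightarrow> real \<Rightarrow> real \<Rightarrow> real \<Rightarrow> real" where
  "T1 p \<mu> \<gamma>1 \<gamma>2 = 1 / ((p - 1) * \<mu>) *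
     ln ((2 powr (1 - p) / \<mu>) / (2 powr (1 - p) / \<mu> - (\<gamma>1 + \<gamma>2) powr (1 - p)))"

end

theory Submission
  imports Defs
begin

text \<open>Along the backward characteristics of \<open>(x, t)\<close>, the sum \<open>\<phi>\<^sub>n + \<psi>\<^sub>n\<close> dominates
  the Picard iterates of \<open>h = \<gamma>\<^sub>1 + \<gamma>\<^sub>2 + 2 \<integral>\<^sub>0\<^sup>t G(h)\<close>, \<open>G(u) = 2^(-p) u^p - \<mu> u / 2\<close>:
  the data satisfy \<open>f \<ge> \<gamma>\<^sub>1\<close>, \<open>g \<ge> \<gamma>\<^sub>2\<close>, the damping \<open>\<mu> / (1 + s)\<close> is at most \<open>\<mu>\<close>,
  and \<open>G\<close> is increasing above \<open>\<gamma>\<^sub>1 + \<gamma>\<^sub>2\<close>. If \<open>\<phi> + \<psi>\<close> were finite at some \<open>(x, \<tau>)\<close>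
  with \<open>T\<^sub>1 < \<tau> < T\<^sup>*\<close>, these iterates would stay bounded at \<open>\<tau>\<close>, and their monotone
  limit would solve the Bernoulli equation \<open>h' = 2^(1-p) h^p - \<mu> h\<close>, \<open>h(0) = \<gamma>\<^sub>1 + \<gamma>\<^sub>2\<close>
  on \<open>[0, \<tau>]\<close>. Its explicit solution \<open>h^(1-p) = C + (h(0)^(1-p) - C) exp((p-1) \<mu> t)\<close>,
  \<open>C = 2^(1-p) / \<mu>\<close>, vanishes at \<open>t = T\<^sub>1\<close>, which is impossible.\<close>

definition dependence_cone :: "real \<Rightarrow> (real \<times> real) set" where
  "dependence_cone c = {(x, t). 0 \<le> t \<and> \<bar>x\<bar> + t < c}"

lemma characteristic_in_dependence_cone:
  assumes "(x, t) \<in> dependence_cone c" "s \<in> {0..t}" "\<bar>e\<bar> \<le> 1"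
  shows "(x + e * (t - s), s) \<in> dependence_cone c"
proof -
  have "\<bar>e * (t - s)\<bar> \<le> t - s"
    using assms(2,3) by (auto simp: abs_mult intro: mult_left_le_one_le)
  then show ?thesis using assms(1,2) unfolding dependence_cone_def by auto
qed

lemma integrable_along_characteristic:
  fixes K :: "real \<Rightarrow> real \<Rightarrow> real"
  assumes K: "continuous_on (dependence_cone c) (case_prod K)"
    and xt: "(x, t) \<in> dependence_cone c" and e: "\<bar>e\<bar> \<le> 1"
  shows "(\<lambda>s. K (x + e * (t - s)) s) integrable_on {0..t}"
proof -
  have "continuous_on {0..t} (\<lambda>s. case_prod K (x + e * (t - s), s))"
    by (rule continuous_on_compose2[OF K])
      (auto intro!: continuous_intros characteristic_in_dependence_cone[OF xt _ e])
  then show ?thesis by (simp add: integrable_continuous_interval)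
qed

lemma integral_rescale_unit_interval:
  fixes h :: "real \<Rightarrow> real"
  assumes "t \<ge> 0"
  shows "integral {0..t} h = t * integral {0..1} (\<lambda>\<sigma>. h (t * \<sigma>))"
proof (cases "t = 0")
  case False
  then have "(\<lambda>x. x / t) ` {0..t} = {0..1}"
    using assms by (auto simp: image_iff field_simps intro!: bexI[of _ "t * _"])
  then have "integral {0..1} (\<lambda>\<sigma>. h (t * \<sigma>)) = integral {0..t} h / t"
    using integral_stretch_real[of t 0 t h] False assms by simp
  then show ?thesis using False by simp
qed simp

text \<open>Rescaling \<open>s = t \<sigma>\<close> moves the integral to the parameter-independent domain
  \<open>[0, 1]\<close>, where continuity in the parameter is standard.\<close>
lemma continuous_on_integral_along_characteristic:
  fixes K :: "real \<Rightarrow> real \<Rightarrow> real"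
  assumes K: "continuous_on (dependence_cone c) (case_prod K)" and e: "\<bar>e\<bar> \<le> 1"
  shows "continuous_on (dependence_cone c)
    (\<lambda>(x, t). integral {0..t} (\<lambda>s. K (x + e * (t - s)) s))"
proof -
  define g where "g = (\<lambda>((x, t), \<sigma>::real). (x + e * (t - t * \<sigma>), t * \<sigma>))"
  have "continuous_on (dependence_cone c \<times> cbox 0 1) (\<lambda>y. case_prod K (g y))"
  proof (rule continuous_on_compose2[OF K])
    show "continuous_on (dependence_cone c \<times> cbox 0 1) g"
      unfolding g_def by (simp add: case_prod_beta') (intro continuous_intros)
    show "g ` (dependence_cone c \<times> cbox 0 1) \<subseteq> dependence_cone c"
    proof (clarsimp simp: g_def)
      fix x t \<sigma> :: real assume xt: "(x, t) \<in> dependence_cone c" and "0 \<le> \<sigma>" "\<sigma> \<le> 1"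
      then have "t * \<sigma> \<in> {0..t}" by (auto simp: dependence_cone_def mult_right_le_one_le)
      from characteristic_in_dependence_cone[OF xt this e]
      show "(x + e * (t - t * \<sigma>), t * \<sigma>) \<in> dependence_cone c" .
    qed
  qed
  then have "continuous_on (dependence_cone c)
      (\<lambda>z. integral (cbox 0 1) (\<lambda>\<sigma>. case_prod K (g (z, \<sigma>))))"
    by (intro integral_continuous_on_param) (simp add: case_prod_beta')
  then have "continuous_on (dependence_cone c)
      (\<lambda>z. snd z * integral {0..1} (\<lambda>\<sigma>. case_prod K (g (z, \<sigma>))))"
    by (intro continuous_intros) (simp add: cbox_interval)
  then show ?thesis
    by (rule continuous_on_eq) (auto simp: dependence_cone_def g_def
      integral_rescale_unit_interval[of _ "\<lambda>s. K (_ + e * (_ - s)) s"])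
qed

lemma exponential_growth_unique:
  fixes w :: "real \<Rightarrow> real"
  assumes w': "\<And>t. t \<in> {0..\<tau>} \<Longrightarrow> (w has_real_derivative k * w t) (at t within {0..\<tau>})"
    and t: "t \<in> {0..\<tau>}"
  shows "w t = w 0 * exp (k * t)"
proof -
  define E where "E t = w t * exp (- k * t)" for t
  have "(E has_real_derivative 0) (at s within {0..\<tau>})" if "s \<in> {0..\<tau>}" for s
    unfolding E_def using w'[OF that]
    by (auto intro!: derivative_eq_intros simp: algebra_simps)
  then obtain c where "\<And>s. s \<in> {0..\<tau>} \<Longrightarrow> E s = c"
    using has_field_derivative_zero_constant[of "{0..\<tau>}" E] by auto
  then have "E t = E 0" using t by auto
  then show ?thesis by (simp add: E_def exp_minus field_simps)
qed

definition reaction :: "real \<Rightarrow> real \<Rightarrow> real \<Rightarrow> real" where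
  "reaction p \<mu> u = 2 powr (-p) * u powr p - \<mu> / 2 * u"

lemma reaction_eq_mult: "u > 0 \<Longrightarrow> reaction p \<mu> u = u * (2 powr (-p) * u powr (p - 1) - \<mu> / 2)"
  unfolding reaction_def using powr_mult_base[of u "p - 1"] by (simp add: algebra_simps)

lemma reaction_le_nonlin:
  assumes "u > 0" "s \<ge> 0" "\<mu> > 0"
  shows "reaction p \<mu> u \<le> 2 powr (-p) * \<bar>u\<bar> powr p - \<mu> / (1 + s) * (u / 2)"
proof -
  have "\<mu> / (1 + s) \<le> \<mu>" using assms by (simp add: divide_le_eq)
  then have "\<mu> / (1 + s) * (u / 2) \<le> \<mu> * (u / 2)" using assms by (intro mult_right_mono) auto
  then show ?thesis using assms unfolding reaction_def by simp
qed

lemma continuous_on_reaction: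
  "continuous_on S h \<Longrightarrow> \<forall>x\<in>S. h x > 0 \<Longrightarrow> continuous_on S (\<lambda>x. reaction p \<mu> (h x))"
  unfolding reaction_def by (auto intro!: continuous_intros)

lemma reaction_bernoulli_linearisation:
  assumes "0 < m" "\<mu> \<noteq> 0"
  shows "(1 - p) * m powr (- p) * (2 * reaction p \<mu> m)
    = (p - 1) * \<mu> * (m powr (1 - p) - 2 powr (1 - p) / \<mu>)"
proof -
  have "m powr (- p) * m powr p = 1" "m powr (- p) * m = m powr (1 - p)"
    using assms(1) by (simp_all add: powr_add[symmetric] powr_mult_base mult.commute)
  moreover have "2 * 2 powr (- p) = 2 powr (1 - p)"
    by (simp add: powr_add[symmetric] powr_mult_base)
  moreover have "(1 - p) * m powr (- p) * (2 * reaction p \<mu> m)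
      = (1 - p) * (2 * 2 powr (- p) * (m powr (- p) * m powr p) - \<mu> * (m powr (- p) * m))"
    unfolding reaction_def by (simp add: algebra_simps)
  ultimately have "(1 - p) * m powr (- p) * (2 * reaction p \<mu> m)
      = (1 - p) * (2 powr (1 - p) - \<mu> * m powr (1 - p))"
    by simp
  also have "\<dots> = (p - 1) * \<mu> * (m powr (1 - p) - 2 powr (1 - p) / \<mu>)"
    using assms(2) by (simp add: field_simps)
  finally show ?thesis .
qed

locale bernoulli_supercritical =
  fixes p \<mu> \<gamma> :: real
  assumes p_gt_1: "1 < p" and mu_pos: "0 < \<mu>" and gamma_pos: "0 < \<gamma>"
    and reaction_gamma_pos: "0 < reaction p \<mu> \<gamma>"
begin

lemma gamma_above_equilibrium: "\<mu> / 2 < 2 powr (-p) * \<gamma> powr (p - 1)"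
  using reaction_gamma_pos gamma_pos by (simp add: reaction_eq_mult zero_less_mult_iff)

lemma reaction_mono:
  assumes "\<gamma> \<le> a" "a \<le> b"
  shows "reaction p \<mu> a \<le> reaction p \<mu> b"
proof -
  have "\<gamma> powr (p - 1) \<le> a powr (p - 1)" "a powr (p - 1) \<le> b powr (p - 1)"
    using assms gamma_pos p_gt_1 by (auto intro!: powr_mono2)
  then have "\<mu> / 2 \<le> 2 powr (-p) * a powr (p - 1)"
    and "2 powr (-p) * a powr (p - 1) \<le> 2 powr (-p) * b powr (p - 1)"
    using gamma_above_equilibrium by (auto intro: order_trans[OF less_imp_le])
  then have "a * (2 powr (-p) * a powr (p - 1) - \<mu> / 2) \<le> b * (2 powr (-p) * b powr (p - 1) - \<mu> / 2)"
    using assms gamma_pos by (intro mult_mono) auto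
  then show ?thesis using assms gamma_pos by (simp add: reaction_eq_mult)
qed

lemma reaction_pos: "\<gamma> \<le> a \<Longrightarrow> 0 < reaction p \<mu> a"
  using reaction_mono[of \<gamma> a] reaction_gamma_pos by simp

text \<open>Picard iteration for \<open>h' = 2 reaction(h)\<close>, \<open>h(0) = \<gamma>\<close>: the equation of the sum of
  the two spatially constant comparison functions whose blow-up time is \<open>T\<^sub>1\<close>.\<close>
primrec picard :: "nat \<Rightarrow> real \<Rightarrow> real" where
  "picard 0 t = \<gamma>"
| "picard (Suc n) t = \<gamma> + 2 * integral {0..t} (\<lambda>s. reaction p \<mu> (picard n s))"

lemma integrable_reaction:
  fixes h :: "real \<Rightarrow> real"
  assumes "continuous_on {a..b} h" "\<forall>s\<in>{a..b}. \<gamma> \<le> h s"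
  shows "(\<lambda>s. reaction p \<mu> (h s)) integrable_on {a..b}"
  using assms gamma_pos
  by (intro integrable_continuous_interval continuous_on_reaction) (auto intro: less_le_trans)

lemma integral_reaction_nonneg:
  fixes h :: "real \<Rightarrow> real"
  assumes "continuous_on {a..b} h" "\<forall>s\<in>{a..b}. \<gamma> \<le> h s"
  shows "0 \<le> integral {a..b} (\<lambda>s. reaction p \<mu> (h s))"
  using assms by (intro integral_nonneg integrable_reaction) (auto intro!: less_imp_le[OF reaction_pos])

lemma picard_continuous_ge:
  "continuous_on {0..c} (picard n) \<and> (\<forall>s\<in>{0..c}. \<gamma> \<le> picard n s)"
proof (induction n)
  case (Suc n)
  then have "(\<lambda>s. reaction p \<mu> (picard n s)) integrable_on {0..c}"
    by (intro integrable_reaction) auto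
  moreover have "0 \<le> integral {0..t} (\<lambda>s. reaction p \<mu> (picard n s))" if "t \<in> {0..c}" for t
    using Suc that by (intro integral_reaction_nonneg) (auto intro: continuous_on_subset)
  ultimately show ?case
    by (auto intro!: continuous_intros indefinite_integral_continuous_1)
qed (auto intro: continuous_intros)

lemma picard_ge: "0 \<le> t \<Longrightarrow> \<gamma> \<le> picard n t"
  using picard_continuous_ge[of t n] by simp

lemma picard_continuous_on: "continuous_on {a..b} (picard n)" if "0 \<le> a"
  using picard_continuous_ge[of b n] that by (auto intro: continuous_on_subset)

lemma integrable_reaction_picard:
  "0 \<le> a \<Longrightarrow> (\<lambda>s. reaction p \<mu> (picard n s)) integrable_on {a..b}"
  by (intro integrable_reaction picard_continuous_on) (auto intro: picard_ge)

lemma integral_reaction_picard_nonneg: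
  "0 \<le> a \<Longrightarrow> 0 \<le> integral {a..b} (\<lambda>s. reaction p \<mu> (picard n s))"
  by (intro integral_reaction_nonneg picard_continuous_on) (auto intro: picard_ge)

lemma picard_le_Suc: "0 \<le> t \<Longrightarrow> picard n t \<le> picard (Suc n) t"
proof (induction n arbitrary: t)
  case 0
  then show ?case using integral_reaction_picard_nonneg[of 0 t 0] by simp
next
  case (Suc n)
  have "integral {0..t} (\<lambda>s. reaction p \<mu> (picard n s))
      \<le> integral {0..t} (\<lambda>s. reaction p \<mu> (picard (Suc n) s))"
    using Suc by (intro integral_le integrable_reaction_picard reaction_mono picard_ge) auto
  then show ?case by simp
qed

lemma picard_mono:
  assumes "0 \<le> s" "s \<le> t"
  shows "picard n s \<le> picard n t"
proof (cases n)
  case (Suc m)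
  have "integral {0..t} (\<lambda>u. reaction p \<mu> (picard m u))
      = integral {0..s} (\<lambda>u. reaction p \<mu> (picard m u)) + integral {s..t} (\<lambda>u. reaction p \<mu> (picard m u))"
    using assms
    by (intro Henstock_Kurzweil_Integration.integral_combine[symmetric] integrable_reaction_picard) auto
  then show ?thesis using Suc integral_reaction_picard_nonneg[OF assms(1), of t m] by simp
qed simp

lemma picard_limit_solves:
  assumes \<tau>: "0 \<le> \<tau>" and bdd: "bdd_above (range (\<lambda>n. picard n \<tau>))"
  obtains L where "continuous_on {0..\<tau>} L" "\<And>t. t \<in> {0..\<tau>} \<Longrightarrow> \<gamma> \<le> L t"
    "\<And>t. t \<in> {0..\<tau>} \<Longrightarrow> L t = \<gamma> + 2 * integral {0..t} (\<lambda>s. reaction p \<mu> (L s))"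
proof -
  obtain B where B: "\<And>n. picard n \<tau> \<le> B" using bdd by (auto simp: bdd_above_def)
  have le_B: "picard n s \<le> B" if "s \<in> {0..\<tau>}" for n s
    using order_trans[OF picard_mono[of s \<tau> n] B] that by simp
  define L where "L s = (SUP n. picard n s)" for s
  have inc: "incseq (\<lambda>n. picard n s)" if "s \<in> {0..\<tau>}" for s
    using picard_le_Suc that by (intro incseq_SucI) auto
  have conv: "(\<lambda>n. picard n s) \<longlonglongrightarrow> L s" if "s \<in> {0..\<tau>}" for s
    unfolding L_def using le_B[OF that] inc[OF that]
    by (intro LIMSEQ_incseq_SUP) (auto intro!: bdd_aboveI2[where M = B])
  have L_ge: "\<gamma> \<le> L s" if "s \<in> {0..\<tau>}" for s
    using incseq_le[OF inc[OF that] conv[OF that], of 0] by simp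
  have MCT: "(\<lambda>s. reaction p \<mu> (L s)) integrable_on {0..t} \<and>
      (\<lambda>n. integral {0..t} (\<lambda>s. reaction p \<mu> (picard n s)))
        \<longlonglongrightarrow> integral {0..t} (\<lambda>s. reaction p \<mu> (L s))"
    if t: "t \<in> {0..\<tau>}" for t
  proof (rule monotone_convergence_increasing)
    show "(\<lambda>s. reaction p \<mu> (picard n s)) integrable_on {0..t}" for n
      by (rule integrable_reaction_picard) simp
    show "reaction p \<mu> (picard n s) \<le> reaction p \<mu> (picard (Suc n) s)" if "s \<in> {0..t}" for n s
      using that by (intro reaction_mono picard_ge picard_le_Suc) auto
    show "(\<lambda>n. reaction p \<mu> (picard n s)) \<longlonglongrightarrow> reaction p \<mu> (L s)" if "s \<in> {0..t}" for s
      unfolding reaction_def using conv[of s] L_ge[of s] gamma_pos that t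
      by (intro tendsto_intros) auto
    have "\<bar>integral {0..t} (\<lambda>s. reaction p \<mu> (picard n s))\<bar> \<le> t * reaction p \<mu> B" for n
    proof -
      have "integral {0..t} (\<lambda>s. reaction p \<mu> (picard n s)) \<le> integral {0..t} (\<lambda>s. reaction p \<mu> B)"
        using t le_B by (intro integral_le integrable_reaction_picard reaction_mono picard_ge) auto
      then show ?thesis using t integral_reaction_picard_nonneg[of 0 t n] by simp
    qed
    then show "bounded (range (\<lambda>n. integral {0..t} (\<lambda>s. reaction p \<mu> (picard n s))))"
      unfolding bounded_real by blast
  qed
  have L_eq: "L t = \<gamma> + 2 * integral {0..t} (\<lambda>s. reaction p \<mu> (L s))" if t: "t \<in> {0..\<tau>}" for t
  proof (rule LIMSEQ_unique)
    show "(\<lambda>n. picard (Suc n) t) \<longlonglongrightarrow> L t" using LIMSEQ_Suc[OF conv[OF t]] .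
    show "(\<lambda>n. picard (Suc n) t) \<longlonglongrightarrow> \<gamma> + 2 * integral {0..t} (\<lambda>s. reaction p \<mu> (L s))"
      using MCT[OF t] by (auto intro!: tendsto_intros)
  qed
  have "continuous_on {0..\<tau>} (\<lambda>t. \<gamma> + 2 * integral {0..t} (\<lambda>s. reaction p \<mu> (L s)))"
    using MCT[of \<tau>] \<tau> by (intro continuous_intros indefinite_integral_continuous_1) auto
  then have "continuous_on {0..\<tau>} L" by (rule continuous_on_eq) (simp add: L_eq)
  then show ?thesis using L_ge L_eq by (rule that)
qed

text \<open>The substitution \<open>w = L^(1-p) - 2^(1-p) / \<mu>\<close> linearises the Bernoulli equation
  \<open>L' = 2^(1-p) L^p - \<mu> L\<close> into \<open>w' = (p - 1) \<mu> w\<close>.\<close>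
lemma bernoulli_solution:
  assumes L: "continuous_on {0..\<tau>} L" and L_pos: "\<And>t. t \<in> {0..\<tau>} \<Longrightarrow> 0 < L t"
    and L_eq: "\<And>t. t \<in> {0..\<tau>} \<Longrightarrow> L t = \<gamma> + 2 * integral {0..t} (\<lambda>s. reaction p \<mu> (L s))"
    and t: "t \<in> {0..\<tau>}"
  shows "L t powr (1 - p) = 2 powr (1 - p) / \<mu> + (\<gamma> powr (1 - p) - 2 powr (1 - p) / \<mu>) * exp ((p - 1) * \<mu> * t)"
proof -
  define C where "C = 2 powr (1 - p) / \<mu>"
  define w where "w s = L s powr (1 - p) - C" for s
  have w': "(w has_real_derivative (p - 1) * \<mu> * w s) (at s within {0..\<tau>})" if s: "s \<in> {0..\<tau>}" for s
  proof -
    have "((\<lambda>t. integral {0..t} (\<lambda>s. reaction p \<mu> (L s))) has_real_derivative reaction p \<mu> (L s))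
        (at s within {0..\<tau>})"
      using L L_pos s by (intro integral_has_real_derivative continuous_on_reaction) auto
    then have "((\<lambda>t. \<gamma> + 2 * integral {0..t} (\<lambda>s. reaction p \<mu> (L s)))
        has_real_derivative 2 * reaction p \<mu> (L s)) (at s within {0..\<tau>})"
      by (auto intro!: derivative_eq_intros)
    then have "(L has_real_derivative 2 * reaction p \<mu> (L s)) (at s within {0..\<tau>})"
      by (rule has_field_derivative_transform_within[where d = 1]) (use s L_eq in auto)
    then have "(w has_real_derivative (1 - p) * L s powr (- p) * (2 * reaction p \<mu> (L s)))
        (at s within {0..\<tau>})"
      unfolding w_def using L_pos[OF s] by (auto intro!: derivative_eq_intros)
    moreover have "(1 - p) * L s powr (- p) * (2 * reaction p \<mu> (L s)) = (p - 1) * \<mu> * w s"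
      using reaction_bernoulli_linearisation[OF L_pos[OF s]] mu_pos by (simp add: w_def C_def)
    ultimately show ?thesis by simp
  qed
  have "w 0 = \<gamma> powr (1 - p) - C" using L_eq[of 0] t by (simp add: w_def)
  then show ?thesis
    using exponential_growth_unique[OF w' t] unfolding w_def C_def by simp
qed

definition lifespan :: real where
  "lifespan = 1 / ((p - 1) * \<mu>) *
     ln ((2 powr (1 - p) / \<mu>) / (2 powr (1 - p) / \<mu> - \<gamma> powr (1 - p)))"

lemma gamma_powr_less: "\<gamma> powr (1 - p) < 2 powr (1 - p) / \<mu>"
proof -
  have "\<mu> * \<gamma> powr (1 - p) < 2 * 2 powr (- p) * \<gamma> powr (p - 1) * \<gamma> powr (1 - p)"
    using gamma_above_equilibrium gamma_pos by (intro mult_strict_right_mono) auto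
  also have "\<dots> = 2 powr (1 - p)"
    using gamma_pos by (simp add: powr_add[symmetric] powr_mult_base mult.assoc)
  finally show ?thesis using mu_pos by (simp add: field_simps)
qed

lemma lifespan_pos: "0 < lifespan"
proof -
  have "1 < (2 powr (1 - p) / \<mu>) / (2 powr (1 - p) / \<mu> - \<gamma> powr (1 - p))"
    using gamma_powr_less gamma_pos by (subst less_divide_eq) auto
  then show ?thesis using p_gt_1 mu_pos by (simp add: lifespan_def)
qed

theorem picard_unbounded:
  assumes "lifespan < \<tau>"
  shows "\<not> bdd_above (range (\<lambda>n. picard n \<tau>))"
proof
  assume bdd: "bdd_above (range (\<lambda>n. picard n \<tau>))"
  have t: "lifespan \<in> {0..\<tau>}" using assms lifespan_pos by auto
  then have "0 \<le> \<tau>" by simp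
  obtain L where L: "continuous_on {0..\<tau>} L" "\<And>t. t \<in> {0..\<tau>} \<Longrightarrow> \<gamma> \<le> L t"
    "\<And>t. t \<in> {0..\<tau>} \<Longrightarrow> L t = \<gamma> + 2 * integral {0..t} (\<lambda>s. reaction p \<mu> (L s))"
    using picard_limit_solves[OF \<open>0 \<le> \<tau>\<close> bdd] by blast
  define C where "C = 2 powr (1 - p) / \<mu>"
  have gC: "\<gamma> powr (1 - p) < C" using gamma_powr_less by (simp add: C_def)
  have "exp ((p - 1) * \<mu> * lifespan) = C / (C - \<gamma> powr (1 - p))"
    using gC gamma_pos p_gt_1 mu_pos by (simp add: lifespan_def C_def)
  then have "L lifespan powr (1 - p) = C + (\<gamma> powr (1 - p) - C) * (C / (C - \<gamma> powr (1 - p)))"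
    using bernoulli_solution[OF L(1) _ L(3) t] L(2) gamma_pos by (force simp: C_def)
  also have "\<dots> = 0" using gC by (simp add: field_simps)
  finally show False using L(2)[OF t] gamma_pos by simp
qed

end

lemma continuous_on_nonlin:
  assumes "0 < p" and "\<forall>(x, s)\<in>S. 0 \<le> s"
    and "continuous_on S (case_prod \<phi>)" "continuous_on S (case_prod \<psi>)"
  shows "continuous_on S (case_prod (nonlin p \<mu> \<phi> \<psi>))"
  using assms unfolding nonlin_def case_prod_beta'
  by (intro continuous_intros continuous_on_powr') (auto simp: case_prod_beta')

lemma iter_continuous:
  assumes p: "0 < p" and f: "continuous_on (ball 0 c) f" and g: "continuous_on (ball 0 c) g"
  shows "continuous_on (dependence_cone c) (case_prod (fst (iter p \<mu> f g \<gamma>1 \<gamma>2 n))) \<and>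
    continuous_on (dependence_cone c) (case_prod (snd (iter p \<mu> f g \<gamma>1 \<gamma>2 n)))"
proof (induction n)
  case (Suc n)
  let ?N = "nonlin p \<mu> (fst (iter p \<mu> f g \<gamma>1 \<gamma>2 n)) (snd (iter p \<mu> f g \<gamma>1 \<gamma>2 n))"
  have N: "continuous_on (dependence_cone c) (case_prod ?N)"
    using Suc p by (intro continuous_on_nonlin) (auto simp: dependence_cone_def)
  have "continuous_on (dependence_cone c) (\<lambda>z. f (fst z + snd z))"
    by (rule continuous_on_compose2[OF f]) (auto simp: dependence_cone_def intro!: continuous_intros)
  moreover have "continuous_on (dependence_cone c) (\<lambda>z. g (fst z - snd z))"
    by (rule continuous_on_compose2[OF g]) (auto simp: dependence_cone_def intro!: continuous_intros)
  moreover note continuous_on_integral_along_characteristic[OF N, of 1]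
    continuous_on_integral_along_characteristic[OF N, of "-1"]
  ultimately show ?case
    by (simp add: Let_def case_prod_beta' algebra_simps continuous_on_add)
qed (simp add: continuous_on_const)

theorem iter_sum_ge_picard:
  assumes bs: "bernoulli_supercritical p \<mu> (\<gamma>1 + \<gamma>2)"
    and f: "continuous_on (ball 0 c) f" "\<And>y. y \<in> ball 0 c \<Longrightarrow> \<gamma>1 \<le> f y"
    and g: "continuous_on (ball 0 c) g" "\<And>y. y \<in> ball 0 c \<Longrightarrow> \<gamma>2 \<le> g y"
    and xt: "(x, t) \<in> dependence_cone c"
  shows "bernoulli_supercritical.picard p \<mu> (\<gamma>1 + \<gamma>2) n t
    \<le> fst (iter p \<mu> f g \<gamma>1 \<gamma>2 n) x t + snd (iter p \<mu> f g \<gamma>1 \<gamma>2 n) x t"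
proof -
  interpret bernoulli_supercritical p \<mu> "\<gamma>1 + \<gamma>2" by (fact bs)
  show ?thesis using xt
  proof (induction n arbitrary: x t)
    case 0
    then show ?case by simp
  next
    case (Suc n)
    define P where "P = fst (iter p \<mu> f g \<gamma>1 \<gamma>2 n)"
    define Q where "Q = snd (iter p \<mu> f g \<gamma>1 \<gamma>2 n)"
    let ?N = "nonlin p \<mu> P Q" and ?G = "\<lambda>s. reaction p \<mu> (picard n s)"
    have N: "continuous_on (dependence_cone c) (case_prod ?N)"
      using iter_continuous[OF _ f(1) g(1)] p_gt_1
      by (intro continuous_on_nonlin) (auto simp: P_def Q_def dependence_cone_def)
    have G_le_N: "?G s \<le> ?N y s" if "(y, s) \<in> dependence_cone c" for y s
    proof -
      have s: "0 \<le> s" using that by (simp add: dependence_cone_def)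
      have "?G s \<le> reaction p \<mu> (P y s + Q y s)"
        using Suc.IH[OF that] picard_ge[OF s] by (intro reaction_mono) (auto simp: P_def Q_def)
      also have "\<dots> \<le> ?N y s"
        using Suc.IH[OF that] picard_ge[OF s, of n] gamma_pos mu_pos s
        unfolding nonlin_def by (intro reaction_le_nonlin) (auto simp: P_def Q_def)
      finally show ?thesis .
    qed
    have "integral {0..t} ?G \<le> integral {0..t} (\<lambda>s. ?N (x + e * (t - s)) s)" if "\<bar>e\<bar> \<le> 1" for e
      using Suc.prems that
      by (intro integral_le integrable_reaction_picard integrable_along_characteristic[OF N]
          G_le_N characteristic_in_dependence_cone) auto
    from this[of 1] this[of "-1"]
    have "2 * integral {0..t} ?G
        \<le> integral {0..t} (\<lambda>s. ?N (x + t - s) s) + integral {0..t} (\<lambda>s. ?N (x - t + s) s)"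
      by (simp add: algebra_simps)
    moreover have "\<gamma>1 \<le> f (x + t)" "\<gamma>2 \<le> g (x - t)"
      using Suc.prems by (auto intro!: f(2) g(2) simp: dependence_cone_def)
    ultimately show ?case by (simp add: Let_def P_def Q_def)
  qed
qed

lemma bernoulli_supercritical_if_large:
  assumes p: "1 < p" and mu: "0 < \<mu>" and gamma: "0 < \<gamma>"
    and large: "(\<mu> * p * 2 powr p) powr (1 / (p - 1)) < \<gamma>"
  shows "bernoulli_supercritical p \<mu> \<gamma>"
proof
  have "\<mu> * p * 2 powr p = ((\<mu> * p * 2 powr p) powr (1 / (p - 1))) powr (p - 1)"
    using p mu by (simp add: powr_powr)
  also have "\<dots> < \<gamma> powr (p - 1)"
    using large p mu by (intro powr_less_mono2) auto
  finally have "\<mu> * p < 2 powr (- p) * \<gamma> powr (p - 1)"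
    by (simp add: powr_minus field_simps)
  moreover have "\<mu> / 2 < \<mu> * p" using p mu by simp
  ultimately show "0 < reaction p \<mu> \<gamma>"
    using gamma by (simp add: reaction_eq_mult)
qed (use assms in auto)

lemma Ck_on_imp_continuous_on:
  assumes "Ck_on k S f"
  shows "continuous_on S f"
proof -
  obtain D where D0: "\<forall>x\<in>S. D 0 x = f x"
    and D: "\<forall>j<k. \<forall>x\<in>S. (D j has_real_derivative D (Suc j) x) (at x within S)"
    and Dk: "continuous_on S (D k)"
    using assms unfolding Ck_on_def by blast
  have "continuous_on S (D 0)"
  proof (cases k)
    case 0
    then show ?thesis using Dk by simp
  next
    case (Suc j)
    then show ?thesis
      using D unfolding continuous_on_eq_continuous_within by (blast intro: DERIV_continuous)
  qed
  then show ?thesis by (rule continuous_on_eq) (use D0 in auto)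
qed

lemma phi_lim_add_psi_lim_eq_infinity:
  assumes "\<And>n. h n \<le> fst (iter p \<mu> f g \<gamma>1 \<gamma>2 n) x t + snd (iter p \<mu> f g \<gamma>1 \<gamma>2 n) x t"
    and "\<not> bdd_above (range h)"
  shows "phi_lim p \<mu> f g \<gamma>1 \<gamma>2 x t + psi_lim p \<mu> f g \<gamma>1 \<gamma>2 x t = \<infinity>"
proof (rule ccontr)
  define S where "S = phi_lim p \<mu> f g \<gamma>1 \<gamma>2 x t + psi_lim p \<mu> f g \<gamma>1 \<gamma>2 x t"
  have le: "ereal (h n) \<le> S" for n
  proof -
    have "ereal (h n) \<le> ereal (fst (iter p \<mu> f g \<gamma>1 \<gamma>2 n) x t) + ereal (snd (iter p \<mu> f g \<gamma>1 \<gamma>2 n) x t)"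
      using assms(1)[of n] by simp
    also have "\<dots> \<le> S"
      unfolding S_def phi_lim_def psi_lim_def by (intro add_mono SUP_upper) auto
    finally show ?thesis .
  qed
  assume "\<not> ?thesis"
  moreover have "S \<noteq> - \<infinity>" using le[of 0] by auto
  ultimately obtain B where "S = ereal B" by (cases S) (auto simp: S_def)
  then have "h n \<le> B" for n using le[of n] by simp
  then show False using assms(2) by (auto simp: bdd_above_def)
qed

lemma blowup_time_le:
  assumes "0 < \<tau>" and "phi_lim p \<mu> f g \<gamma>1 \<gamma>2 x \<tau> + psi_lim p \<mu> f g \<gamma>1 \<gamma>2 x \<tau> = \<infinity>"
  shows "blowup_time Rs Ts p \<mu> f g \<gamma>1 \<gamma>2 x \<le> ereal \<tau>"
  unfolding blowup_time_def
proof (rule Sup_least, clarify)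
  fix t assume "\<forall>\<tau>'. 0 < \<tau>' \<and> \<tau>' < t \<longrightarrow> (x, \<tau>') \<in> coneK Rs Ts \<and>
    phi_lim p \<mu> f g \<gamma>1 \<gamma>2 x \<tau>' + psi_lim p \<mu> f g \<gamma>1 \<gamma>2 x \<tau>' < \<infinity>"
  then show "ereal t \<le> ereal \<tau>" using assms by (metis ereal_less_eq(3) less_irrefl not_le)
qed

theorem lemma4p4:
  fixes p \<mu> Rs Ts \<gamma>1 \<gamma>2 \<epsilon>0 :: real and f g :: "real \<Rightarrow> real"
  assumes hp: "p > 1" and hmu: "\<mu> > 0" and hpmu: "p < 1 + 2 / \<mu>"
    and hR: "Rs > 0" and hT: "Ts > 0"
    and hg1: "\<gamma>1 > 0" and hg2: "\<gamma>2 > 0"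
    and hgam1: "\<gamma>1 + \<gamma>2 > 1"
    and hgam2: "\<gamma>1 + \<gamma>2 > (\<mu> * p * 2 powr p) powr (1 / (p - 1))"
    and A1: "T1 p \<mu> \<gamma>1 \<gamma>2 < Ts"
    and A2: "\<forall>x\<in>ball 0 (Rs + Ts). f x \<ge> \<gamma>1 \<and> g x \<ge> \<gamma>2"
    and A3: "Ck_on 4 (cball 0 (Rs + Ts)) f" "Ck_on 4 (cball 0 (Rs + Ts)) g"
    and A4: "\<epsilon>0 > 0"
      "\<forall>x\<in>ball 0 (Rs + Ts). 2 powr (-p) * (\<gamma>1 + \<gamma>2) powr p - \<mu> / 2 * (\<gamma>1 + \<gamma>2)
          \<ge> (2 + \<epsilon>0) * (\<bar>deriv f x\<bar> + \<bar>deriv g x\<bar>)"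
  shows "\<forall>x\<in>ball 0 Rs. blowup_time Rs Ts p \<mu> f g \<gamma>1 \<gamma>2 x < ereal Ts"
proof
  fix x :: real assume x: "x \<in> ball 0 Rs"
  interpret bernoulli_supercritical p \<mu> "\<gamma>1 + \<gamma>2"
    using bernoulli_supercritical_if_large hp hmu hg1 hg2 hgam2 by simp
  have "lifespan < Ts" using A1 by (simp add: T1_def lifespan_def)
  then obtain \<tau> where \<tau>: "lifespan < \<tau>" "\<tau> < Ts" using dense by blast
  have "continuous_on (ball 0 (Rs + Ts)) f" "continuous_on (ball 0 (Rs + Ts)) g"
    using A3 by (auto intro: continuous_on_subset[OF Ck_on_imp_continuous_on] ball_subset_cball)
  moreover have "(x, \<tau>) \<in> dependence_cone (Rs + Ts)"
    using x \<tau> lifespan_pos by (auto simp: dependence_cone_def)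
  ultimately have "picard n \<tau> \<le> fst (iter p \<mu> f g \<gamma>1 \<gamma>2 n) x \<tau> + snd (iter p \<mu> f g \<gamma>1 \<gamma>2 n) x \<tau>" for n
    using A2 iter_sum_ge_picard[OF bernoulli_supercritical_axioms] by blast
  then have "phi_lim p \<mu> f g \<gamma>1 \<gamma>2 x \<tau> + psi_lim p \<mu> f g \<gamma>1 \<gamma>2 x \<tau> = \<infinity>"
    using picard_unbounded[OF \<tau>(1)] by (rule phi_lim_add_psi_lim_eq_infinity)
  then have "blowup_time Rs Ts p \<mu> f g \<gamma>1 \<gamma>2 x \<le> ereal \<tau>"
    using \<tau>(1) lifespan_pos by (intro blowup_time_le) auto
  then show "blowup_time Rs Ts p \<mu> f g \<gamma>1 \<gamma>2 x < ereal Ts"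
    using \<tau>(2) by (simp add: le_less_trans)
qed

end
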